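(* Let $\mathcal M$ be a smooth manifold on which the group $\mathbb{R}^p$ acts (smoothly). Assume that some full lattice $\Gamma$ of $\mathbb{R}^p$ acts freely and properly on $\mathcal M$ (via the restricted action). Then $\mathbb{R}^p$ acts freely on $\mathcal M$.
   Context: A full lattice of $\mathbb{R}^p$ is a discrete subgroup $\Gamma$ with $\mathbb{R}^p/\Gamma$ compact. *)

theory Defs
  imports "HOL-Analysis.Analysis"
begin

text \<open>C-infinity maps between open subsets of finite-dimensional real vector spaces:
  f lies in a family of continuous, (Frechet) differentiable maps which is closed under
  taking directional derivatives.\<close>
definition smooth_on :: "'a::euclidean_space set \<Rightarrow> ('a \<Rightarrow> 'b::euclidean_space) \<Rightarrow> bool" where
  "smooth_on S f \<longleftrightarrow> open S \<and>
     (\<exists>F. f \<in> F \<and> (\<forall>g\<in>F. continuous_on S g \<and>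
        (\<exists>g'. (\<forall>x\<in>S. (g has_derivative g' x) (at x)) \<and> (\<forall>v. (\<lambda>x. g' x v) \<in> F))))"

definition smooth_atlas :: "('m::topological_space set \<times> ('m \<Rightarrow> 'e::euclidean_space)) set \<Rightarrow> bool" where
  "smooth_atlas A \<longleftrightarrow>
     (\<Union>(fst ` A) = UNIV) \<and>
     (\<forall>(U,\<phi>)\<in>A. open U \<and> open (\<phi> ` U) \<and> (\<exists>\<psi>. homeomorphism U (\<phi> ` U) \<phi> \<psi>)) \<and>
     (\<forall>(U,\<phi>)\<in>A. \<forall>(V,\<kappa>)\<in>A. smooth_on (\<phi> ` (U \<inter> V)) (\<kappa> \<circ> inv_into U \<phi>))"

definition group_action :: "(real^'p \<Rightarrow> 'm \<Rightarrow> 'm) \<Rightarrow> bool" where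
  "group_action act \<longleftrightarrow> (\<forall>x. act 0 x = x) \<and> (\<forall>s t x. act (s + t) x = act s (act t x))"

definition smooth_action :: "('m::topological_space set \<times> ('m \<Rightarrow> 'e::euclidean_space)) set
     \<Rightarrow> (real^'p \<Rightarrow> 'm \<Rightarrow> 'm) \<Rightarrow> bool" where
  "smooth_action A act \<longleftrightarrow> group_action act \<and>
     continuous_on UNIV (\<lambda>(t,x). act t x) \<and>
     (\<forall>(U,\<phi>)\<in>A. \<forall>(V,\<kappa>)\<in>A.
        smooth_on {(t,y). y \<in> \<phi> ` U \<and> act t (inv_into U \<phi> y) \<in> V}
                  (\<lambda>(t,y). \<kappa> (act t (inv_into U \<phi> y))))"

definition coset_of :: "(real^'p) set \<Rightarrow> real^'p \<Rightarrow> (real^'p) set" where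
  "coset_of G x = {y. y - x \<in> G}"

definition quotient_top :: "(real^'p) set \<Rightarrow> (real^'p) set topology" where
  "quotient_top G = topology (\<lambda>\<U>. \<U> \<subseteq> range (coset_of G) \<and> open (\<Union>\<U>))"

definition discrete_subgroup :: "(real^'p) set \<Rightarrow> bool" where
  "discrete_subgroup G \<longleftrightarrow> 0 \<in> G \<and> (\<forall>x\<in>G. \<forall>y\<in>G. x - y \<in> G) \<and>
     (\<forall>x\<in>G. \<exists>e>0. \<forall>y\<in>G. dist y x < e \<longrightarrow> y = x)"

definition full_lattice :: "(real^'p) set \<Rightarrow> bool" where
  "full_lattice G \<longleftrightarrow> discrete_subgroup G \<and> compact_space (quotient_top G)"

definition acts_freely_on :: "(real^'p) set \<Rightarrow> (real^'p \<Rightarrow> 'm \<Rightarrow> 'm) \<Rightarrow> bool" where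
  "acts_freely_on G act \<longleftrightarrow> (\<forall>g\<in>G. \<forall>x. act g x = x \<longrightarrow> g = 0)"

definition acts_properly_on :: "(real^'p) set \<Rightarrow> (real^'p \<Rightarrow> 'm::topological_space \<Rightarrow> 'm) \<Rightarrow> bool" where
  "acts_properly_on G act \<longleftrightarrow>
     proper_map (prod_topology (top_of_set G) (euclidean :: 'm topology))
                (prod_topology (euclidean :: 'm topology) euclidean) (\<lambda>(g,x). (act g x, x))"

end

theory Submission
  imports Defs
begin

text \<open>Since \<open>\<Gamma>\<close> is cocompact, every point of \<open>\<real>\<^sup>p\<close> lies within a fixed distance \<open>r\<close>
  of \<open>\<Gamma>\<close>. If \<open>s\<close> fixes \<open>x\<close>, write \<open>s = g + k\<close> with \<open>g \<in> \<Gamma>\<close> and \<open>|k| \<le> r\<close>; then \<open>g\<close> maps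
  the point \<open>k x\<close> of the compact arc \<open>{k x. |k| \<le> r}\<close> back to \<open>x\<close>, so properness bounds \<open>|g|\<close>.
  Hence the stabiliser of \<open>x\<close> is bounded; being closed under integer multiples, it is
  trivial.\<close>

lemma coset_of_eq_iff:
  fixes G :: "(real^'p) set"
  assumes "0 \<in> G" and sub: "\<forall>x\<in>G. \<forall>y\<in>G. x - y \<in> G"
  shows "coset_of G a = coset_of G b \<longleftrightarrow> a - b \<in> G"
proof
  assume "coset_of G a = coset_of G b"
  moreover have "a \<in> coset_of G a" using \<open>0 \<in> G\<close> by (simp add: coset_of_def)
  ultimately show "a - b \<in> G" by (simp add: coset_of_def)
next
  assume ab: "a - b \<in> G"
  have "w - a \<in> G \<longleftrightarrow> w - b \<in> G" for w
  proof
    assume "w - a \<in> G"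
    moreover have "b - a \<in> G" using sub[rule_format, OF \<open>0 \<in> G\<close> ab] by simp
    ultimately have "(w - a) - (b - a) \<in> G" using sub by blast
    then show "w - b \<in> G" by simp
  next
    assume "w - b \<in> G"
    with sub ab have "(w - b) - (a - b) \<in> G" by blast
    then show "w - a \<in> G" by simp
  qed
  then show "coset_of G a = coset_of G b" by (auto simp: coset_of_def)
qed

lemma Union_Int_cosets:
  fixes G :: "(real^'p) set"
  assumes "0 \<in> G" and "\<forall>x\<in>G. \<forall>y\<in>G. x - y \<in> G"
    and "\<U> \<subseteq> range (coset_of G)" and "\<V> \<subseteq> range (coset_of G)"
  shows "\<Union>(\<U> \<inter> \<V>) = \<Union>\<U> \<inter> \<Union>\<V>"
proof -
  have "\<Union>\<U> \<inter> \<Union>\<V> \<subseteq> \<Union>(\<U> \<inter> \<V>)"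
  proof
    fix z assume "z \<in> \<Union>\<U> \<inter> \<Union>\<V>"
    then obtain a b where ab: "coset_of G a \<in> \<U>" "coset_of G b \<in> \<V>"
      "z \<in> coset_of G a" "z \<in> coset_of G b"
      using assms(3,4) by blast
    then have "z - a \<in> G" "z - b \<in> G" by (simp_all add: coset_of_def)
    then have "(z - b) - (z - a) \<in> G" using assms(2) by blast
    then have "coset_of G a = coset_of G b" using coset_of_eq_iff[OF assms(1,2)] by simp
    with ab have "coset_of G a \<in> \<U> \<inter> \<V>" by simp
    with ab(3) show "z \<in> \<Union>(\<U> \<inter> \<V>)" by blast
  qed
  then show ?thesis by blast
qed

lemma openin_quotient_top:
  fixes G :: "(real^'p) set"
  assumes "0 \<in> G" and "\<forall>x\<in>G. \<forall>y\<in>G. x - y \<in> G"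
  shows "openin (quotient_top G) \<U> \<longleftrightarrow> \<U> \<subseteq> range (coset_of G) \<and> open (\<Union>\<U>)"
proof -
  have "istopology (\<lambda>\<U>. \<U> \<subseteq> range (coset_of G) \<and> open (\<Union>\<U>))"
    unfolding istopology_def
  proof (rule conjI; intro allI impI)
    fix \<U> \<V> :: "(real^'p) set set"
    assume "\<U> \<subseteq> range (coset_of G) \<and> open (\<Union>\<U>)" "\<V> \<subseteq> range (coset_of G) \<and> open (\<Union>\<V>)"
    then show "\<U> \<inter> \<V> \<subseteq> range (coset_of G) \<and> open (\<Union>(\<U> \<inter> \<V>))"
      using Union_Int_cosets[OF assms] by auto
  next
    fix \<K> :: "(real^'p) set set set"
    assume "\<forall>\<U>\<in>\<K>. \<U> \<subseteq> range (coset_of G) \<and> open (\<Union>\<U>)"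
    moreover have "\<Union>(\<Union>\<K>) = \<Union>(Union ` \<K>)" by blast
    ultimately show "\<Union>\<K> \<subseteq> range (coset_of G) \<and> open (\<Union>(\<Union>\<K>))" by auto
  qed
  then show ?thesis by (simp add: quotient_top_def)
qed

lemma topspace_quotient_top:
  fixes G :: "(real^'p) set"
  assumes "0 \<in> G" and "\<forall>x\<in>G. \<forall>y\<in>G. x - y \<in> G"
  shows "topspace (quotient_top G) = range (coset_of G)"
proof -
  have "x \<in> coset_of G x" for x using assms(1) by (simp add: coset_of_def)
  then have "\<Union>(range (coset_of G)) = UNIV" by blast
  then have "openin (quotient_top G) (range (coset_of G))"
    using openin_quotient_top[OF assms] by simp
  then show ?thesis
    using openin_subset openin_topspace openin_quotient_top[OF assms] by blast
qed

lemma Union_cosets_ball: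
  fixes G :: "(real^'p) set"
  assumes "\<forall>x\<in>G. \<forall>y\<in>G. x - y \<in> G"
  shows "\<Union>(coset_of G ` ball 0 r) = (\<Union>g\<in>G. ball g r)"
proof (rule set_eqI, rule iffI)
  fix z assume "z \<in> \<Union>(coset_of G ` ball 0 r)"
  then obtain y where "norm y < r" "z - y \<in> G" by (auto simp: coset_of_def)
  then show "z \<in> (\<Union>g\<in>G. ball g r)" by (auto simp: dist_norm intro!: bexI[of _ "z - y"])
next
  fix z assume "z \<in> (\<Union>g\<in>G. ball g r)"
  then obtain g where "g \<in> G" "norm (z - g) < r" by (auto simp: dist_norm norm_minus_commute)
  then show "z \<in> \<Union>(coset_of G ` ball 0 r)"
    unfolding coset_of_def by (force intro!: bexI[of _ "z - g"])
qed

text \<open>The cosets meeting \<open>ball 0 n\<close> form an increasing open cover of the quotient.\<close>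

lemma compact_quotient_imp_relatively_dense:
  fixes G :: "(real^'p) set"
  assumes "0 \<in> G" and sub: "\<forall>x\<in>G. \<forall>y\<in>G. x - y \<in> G"
    and "compact_space (quotient_top G)"
  obtains r where "\<And>s. \<exists>g\<in>G. norm (s - g) < r"
proof -
  define W where "W n = coset_of G ` ball 0 (real n)" for n :: nat
  have open_W: "openin (quotient_top G) (W n)" for n
    using Union_cosets_ball[OF sub] openin_quotient_top[OF assms(1,2)]
    by (auto simp: W_def open_UN)
  have "topspace (quotient_top G) \<subseteq> \<Union>(range W)"
  proof
    fix c assume "c \<in> topspace (quotient_top G)"
    then obtain s where "c = coset_of G s" using topspace_quotient_top[OF assms(1,2)] by blast
    moreover obtain n :: nat where "norm s < real n" using reals_Archimedean2 by blast
    ultimately have "c \<in> W n" by (simp add: W_def)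
    then show "c \<in> \<Union>(range W)" by blast
  qed
  with assms(3) open_W obtain F where F: "finite F" "F \<subseteq> range W" "topspace (quotient_top G) \<subseteq> \<Union>F"
    unfolding compact_space_def compactin_def by (metis (no_types, lifting) imageE)
  then obtain I where I: "finite I" "F = W ` I" by (meson finite_subset_image subset_UNIV)
  define N where "N = Max (insert 0 I)"
  have "W n \<subseteq> W N" if "n \<in> I" for n
  proof -
    have "n \<le> N" using that I by (simp add: N_def)
    then show ?thesis unfolding W_def by (intro image_mono) auto
  qed
  then have cover: "range (coset_of G) \<subseteq> W N"
    using F I topspace_quotient_top[OF assms(1,2)] by blast
  have "\<exists>g\<in>G. norm (s - g) < real N" for s
  proof -
    have "coset_of G s \<in> coset_of G ` ball 0 (real N)" using cover unfolding W_def by blast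
    then obtain y where y: "norm y < real N" "coset_of G s = coset_of G y" by auto
    then have "s - y \<in> G" using coset_of_eq_iff[OF assms(1,2)] by simp
    with y show ?thesis by (intro bexI[of _ "s - y"]) auto
  qed
  then show thesis using that by blast
qed

lemma proper_action_bounded_return_set:
  fixes act :: "real^'p \<Rightarrow> 'm::topological_space \<Rightarrow> 'm"
  assumes "acts_properly_on G act" and "compact K"
  shows "bounded {g \<in> G. \<exists>y\<in>K. act g y = x}"
proof -
  let ?P = "{p \<in> topspace (prod_topology (top_of_set G) (euclidean :: 'm topology)).
              (\<lambda>(g,y). (act g y, y)) p \<in> {x} \<times> K}"
  have "compactin (prod_topology euclidean euclidean) ({x} \<times> K)"
    using \<open>compact K\<close> by (simp add: compact_Times)
  then have "compactin (prod_topology (top_of_set G) euclidean) ?P"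
    using compactin_proper_map_preimage assms(1) unfolding acts_properly_on_def by blast
  then have "compactin (top_of_set G) (fst ` ?P)"
    by (rule image_compactin) (rule continuous_map_fst)
  then have "bounded (fst ` ?P)"
    by (simp add: compactin_subtopology compact_imp_bounded)
  moreover have "{g \<in> G. \<exists>y\<in>K. act g y = x} \<subseteq> fst ` ?P"
  proof
    fix g assume "g \<in> {g \<in> G. \<exists>y\<in>K. act g y = x}"
    then obtain y where "g \<in> G" "y \<in> K" "act g y = x" by blast
    then have "(g, y) \<in> ?P" by simp
    then show "g \<in> fst ` ?P" by (rule rev_image_eqI) simp
  qed
  ultimately show ?thesis by (rule bounded_subset)
qed

definition stabilizer :: "(real^'p \<Rightarrow> 'm \<Rightarrow> 'm) \<Rightarrow> 'm \<Rightarrow> (real^'p) set" where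
  "stabilizer act x = {t. act t x = x}"

lemma scaleR_of_nat_in_stabilizer:
  assumes "group_action act" and "t \<in> stabilizer act x"
  shows "real n *\<^sub>R t \<in> stabilizer act x"
proof (induction n)
  case (Suc n)
  have "real (Suc n) *\<^sub>R t = t + real n *\<^sub>R t" by (simp add: algebra_simps)
  with Suc assms show ?case by (simp add: stabilizer_def group_action_def)
qed (use assms in \<open>simp add: stabilizer_def group_action_def\<close>)

lemma bounded_stabilizer_of_relatively_dense_proper:
  fixes act :: "real^'p \<Rightarrow> 'm::topological_space \<Rightarrow> 'm"
  assumes "group_action act" and cont: "continuous_on UNIV (\<lambda>s. act s x)"
    and dense: "\<And>s. \<exists>g\<in>G. norm (s - g) < r" and "acts_properly_on G act"
  shows "bounded (stabilizer act x)"
proof -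
  define K where "K = (\<lambda>k. act k x) ` cball 0 r"
  have "compact K"
    unfolding K_def by (rule compact_continuous_image) (auto intro: continuous_on_subset[OF cont])
  then obtain B where B: "\<forall>g\<in>{g \<in> G. \<exists>y\<in>K. act g y = x}. norm g \<le> B"
    using proper_action_bounded_return_set[OF \<open>acts_properly_on G act\<close>] bounded_iff by blast
  have "norm s \<le> B + r" if "s \<in> stabilizer act x" for s
  proof -
    obtain g where g: "g \<in> G" "norm (s - g) < r" using dense by blast
    have "act g (act (s - g) x) = act (g + (s - g)) x"
      using \<open>group_action act\<close> unfolding group_action_def by metis
    also have "\<dots> = x" using that by (simp add: stabilizer_def)
    finally have "act g (act (s - g) x) = x" .
    moreover have "act (s - g) x \<in> K" using g by (auto simp: K_def)
    ultimately have "norm g \<le> B" using B g by blast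
    then show ?thesis using g norm_triangle_ineq[of g "s - g"] by simp
  qed
  then show ?thesis by (auto simp: bounded_iff)
qed

lemma zero_if_bounded_nat_multiples:
  fixes t :: "'a::real_normed_vector"
  assumes "bounded S" and "\<And>n. real n *\<^sub>R t \<in> S"
  shows "t = 0"
proof (rule ccontr)
  assume "t \<noteq> 0"
  obtain B where B: "\<And>n. norm (real n *\<^sub>R t) \<le> B"
    using assms by (meson bounded_iff)
  obtain n :: nat where "B / norm t < real n" using reals_Archimedean2 by blast
  with \<open>t \<noteq> 0\<close> have "B < norm (real n *\<^sub>R t)" by (simp add: field_simps)
  with B show False by (meson not_le)
qed

lemma continuous_on_orbit_map:
  assumes "continuous_on UNIV (\<lambda>(t,x). act t x)"
  shows "continuous_on UNIV (\<lambda>t. act t x)"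
proof -
  have "continuous_on UNIV ((\<lambda>(t,x). act t x) \<circ> (\<lambda>t. (t, x)))"
    by (intro continuous_on_compose continuous_intros continuous_on_subset[OF assms]) auto
  then show ?thesis by (simp add: o_def)
qed

theorem mainTheorem2:
  fixes A :: "('m::{t2_space, second_countable_topology} set \<times> ('m \<Rightarrow> 'e::euclidean_space)) set"
    and act :: "real^'p \<Rightarrow> 'm \<Rightarrow> 'm"
    and \<Gamma> :: "(real^'p) set"
  assumes "smooth_atlas A"
    and "smooth_action A act"
    and "full_lattice \<Gamma>"
    and "acts_freely_on \<Gamma> act"
    and "acts_properly_on \<Gamma> act"
  shows "acts_freely_on UNIV act"
proof -
  have action: "group_action act" and cont: "continuous_on UNIV (\<lambda>(t,x). act t x)"
    using assms(2) by (auto simp: smooth_action_def)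
  obtain r where dense: "\<And>s. \<exists>g\<in>\<Gamma>. norm (s - g) < r"
    using assms(3) compact_quotient_imp_relatively_dense
    unfolding full_lattice_def discrete_subgroup_def by metis
  have "t = 0" if "act t x = x" for t x
  proof (rule zero_if_bounded_nat_multiples)
    show "bounded (stabilizer act x)"
      using bounded_stabilizer_of_relatively_dense_proper[OF action
          continuous_on_orbit_map[OF cont] dense assms(5)] .
    show "real n *\<^sub>R t \<in> stabilizer act x" for n
      using scaleR_of_nat_in_stabilizer[OF action] that by (simp add: stabilizer_def)
  qed
  then show ?thesis by (simp add: acts_freely_on_def)
qed

end
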